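(* Let $K\subseteq\mathbb R^d$ be a compact set satisfying LMI($1$). For every $k\in\mathbb N$ there is $C_k>0$ such that for all $\varepsilon\in(0,1)$, $x\in\partial K$, $r>0$ and every polynomial $P$ of degree at most $k$, \[\sum_{|\alpha|=k}\frac{|\partial^\alpha P(0)|}{\alpha!}\le\frac{C_k}{r^k}\sup\{|P(y)|:y\in A_{x,\varepsilon},\ |y|\le r\}.\]
   Context: $A_{x,\varepsilon}=\varepsilon^{-1}(K-x)\cup\{y\in\mathbb R^d:|y|\ge\varepsilon^{-1}\}$. $K$ satisfies LMI($1$) if there are $\varepsilon_0>0$ and constants $c_k\ge1$ such that for every $k$, every polynomial $P$ of degree $\le k$, every $\varepsilon\in(0,\varepsilon_0)$ and every $x_0\in K$: $|\nabla P(x_0)|\le c_k\varepsilon^{-1}\sup\{|P(y)|:y\in B(x_0,\varepsilon)\cap K\}$ ($B$ the closed ball). *)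

theory Defs
  imports "HOL-Analysis.Analysis"
begin

text \<open>Points of R^d are vectors real^'d (d = CARD('d)). Multi-indices are
functions 'd \<Rightarrow> nat; |alpha| = sum alpha UNIV.\<close>

definition mono :: "('d::finite \<Rightarrow> nat) \<Rightarrow> real^'d \<Rightarrow> real" where
  "mono \<alpha> y = (\<Prod>i\<in>UNIV. (y $ i) ^ (\<alpha> i))"

definition midx :: "nat \<Rightarrow> ('d::finite \<Rightarrow> nat) set" where
  "midx k = {\<alpha>. sum \<alpha> UNIV \<le> k}"

definition polyfun :: "nat \<Rightarrow> (('d::finite \<Rightarrow> nat) \<Rightarrow> real) \<Rightarrow> real^'d \<Rightarrow> real" where
  "polyfun k c y = (\<Sum>\<alpha>\<in>midx k. c \<alpha> * mono \<alpha> y)"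

definition is_poly_deg :: "nat \<Rightarrow> (real^'d::finite \<Rightarrow> real) \<Rightarrow> bool" where
  "is_poly_deg k P \<longleftrightarrow> (\<exists>c. P = polyfun k c)"

definition grad :: "(real^'d::finite \<Rightarrow> real) \<Rightarrow> real^'d \<Rightarrow> real^'d" where
  "grad P x = (\<chi> i. deriv (\<lambda>t. P (x + t *\<^sub>R axis i 1)) 0)"

definition LMI1 :: "(real^'d::finite) set \<Rightarrow> bool" where
  "LMI1 K \<longleftrightarrow> (\<exists>\<epsilon>0>0. \<exists>c::nat \<Rightarrow> real. (\<forall>k. c k \<ge> 1) \<and>
     (\<forall>k P \<epsilon> x0. is_poly_deg k P \<and> 0 < \<epsilon> \<and> \<epsilon> < \<epsilon>0 \<and> x0 \<in> K \<longrightarrow>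
        norm (grad P x0) \<le> c k / \<epsilon> * Sup {\<bar>P y\<bar> | y. y \<in> cball x0 \<epsilon> \<inter> K}))"

definition Aset :: "(real^'d::finite) set \<Rightarrow> real^'d \<Rightarrow> real \<Rightarrow> (real^'d) set" where
  "Aset K x \<epsilon> = (\<lambda>y. (1/\<epsilon>) *\<^sub>R (y - x)) ` K \<union> {y. norm y \<ge> 1/\<epsilon>}"

end

theory Submission
  imports Defs
begin

text \<open>For \<open>|\<alpha>| = k\<close>, the coefficient \<open>c \<alpha>\<close> times \<open>\<alpha>!\<close> is the value of any \<open>k\<close>-th order operator built
  from partial derivatives, or (scaled by \<open>h\<^sup>k\<close>) from forward differences of step \<open>h\<close>, applied to
  \<open>P = polyfun k c\<close>. If \<open>r \<ge> 4/\<epsilon>\<close>, the shell \<open>r/4 \<le> |y| \<le> r\<close> lies in \<open>Aset K x \<epsilon>\<close>, and a \<open>k\<close>-fold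
  forward difference with step \<open>h \<sim> r/k\<close> taken inside the shell gives \<open>h\<^sup>k |c \<alpha>| \<le> 2\<^sup>k sup |P|\<close>.
  Otherwise undo the rescaling: \<open>Q z = P ((z - x)/\<epsilon>)\<close> is again a polynomial of degree \<open>k\<close>, and
  applying LMI(1) \<open>k\<close> times at \<open>x\<close> with radius \<open>\<delta> = r\<epsilon>/(k+1)\<close> bounds \<open>\<partial>\<^sup>\<alpha>Q x = \<epsilon>\<^sup>-\<^sup>k \<alpha>! c \<alpha>\<close> by
  \<open>(C/\<delta>)\<^sup>k\<close> times the supremum of \<open>|Q|\<close> on \<open>K \<inter> cball x (r\<epsilon>)\<close>, which is a supremum of \<open>|P|\<close> over
  part of \<open>Aset K x \<epsilon> \<inter> cball 0 r\<close>. When \<open>\<delta>\<close> is beyond the range \<open>\<epsilon>\<^sub>0\<close> of LMI(1) but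
  \<open>r < 4/\<epsilon>\<close>, shrinking \<open>r\<close> first loses only a factor depending on \<open>k\<close> and \<open>\<epsilon>\<^sub>0\<close>.\<close>

lemma finite_midx: "finite (midx k :: ('d::finite \<Rightarrow> nat) set)"
proof (rule finite_subset)
  show "midx k \<subseteq> PiE (UNIV::'d set) (\<lambda>_. {..k})"
  proof
    fix \<alpha> assume "\<alpha> \<in> midx k"
    then have "\<alpha> i \<le> k" for i using member_le_sum[of i UNIV \<alpha>] by (simp add: midx_def)
    then show "\<alpha> \<in> PiE UNIV (\<lambda>_. {..k})" by auto
  qed
qed (auto intro: finite_PiE)

lemma midx_0: "midx 0 = {\<lambda>_. 0}"
  by (auto simp: midx_def fun_eq_iff)

lemma mono_zero [simp]: "mono (\<lambda>_. 0) y = 1"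
  by (simp add: mono_def)

lemma mono_add: "mono (\<lambda>i. \<alpha> i + \<beta> i) y = mono \<alpha> y * mono \<beta> y"
  by (simp add: mono_def power_add prod.distrib)

lemma mono_unit: "mono (\<lambda>i. if i = j then 1 else 0) y = y $ j"
  by (simp add: mono_def if_distrib[where f="\<lambda>n. _ ^ n"] cong: if_cong)

lemma polyfun_0: "polyfun 0 c y = c (\<lambda>_. 0)"
  by (simp add: polyfun_def midx_0)

lemma polyfun_add: "polyfun n c y + polyfun n d y = polyfun n (\<lambda>\<alpha>. c \<alpha> + d \<alpha>) y"
  by (simp add: polyfun_def sum.distrib distrib_right)

lemma polyfun_cmult: "a * polyfun n c y = polyfun n (\<lambda>\<alpha>. a * c \<alpha>) y"
  by (simp add: polyfun_def sum_distrib_left mult.assoc)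

lemma polyfun_zero: "polyfun n (\<lambda>_. 0) y = 0"
  by (simp add: polyfun_def)

lemma polyfun_delta:
  assumes "sum \<gamma> UNIV \<le> n"
  shows "polyfun n (\<lambda>\<beta>. if \<beta> = \<gamma> then 1 else 0) = mono (\<gamma>::'d::finite \<Rightarrow> nat)"
proof
  fix y
  have "\<gamma> \<in> midx n" using assms by (simp add: midx_def)
  then show "polyfun n (\<lambda>\<beta>. if \<beta> = \<gamma> then 1 else 0) y = mono \<gamma> y"
    by (simp add: polyfun_def if_distrib[where f="\<lambda>a. a * _"] sum.delta[OF finite_midx]
        cong: if_cong)
qed

lemma is_poly_deg_polyfun [simp]: "is_poly_deg n (polyfun n c)"
  by (auto simp: is_poly_deg_def)

lemma is_poly_deg_monomial: "sum \<gamma> UNIV \<le> n \<Longrightarrow> is_poly_deg n (mono (\<gamma>::'d::finite \<Rightarrow> nat))"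
  unfolding is_poly_deg_def by (metis polyfun_delta)

lemma is_poly_deg_add:
  assumes "is_poly_deg n P" "is_poly_deg n Q"
  shows "is_poly_deg n (\<lambda>y::real^'d::finite. P y + Q y)"
  using assms by (auto simp: is_poly_deg_def polyfun_add)

lemma is_poly_deg_cmult:
  assumes "is_poly_deg n P"
  shows "is_poly_deg n (\<lambda>y::real^'d::finite. a * P y)"
  using assms by (auto simp: is_poly_deg_def polyfun_cmult)

lemma is_poly_deg_zero: "is_poly_deg n (\<lambda>y::real^'d::finite. 0)"
  by (auto simp: is_poly_deg_def fun_eq_iff polyfun_zero intro!: exI[of _ "\<lambda>_. 0"])

lemma is_poly_deg_sum:
  assumes "finite I" "\<And>i. i \<in> I \<Longrightarrow> is_poly_deg n (f i)"
  shows "is_poly_deg n (\<lambda>y::real^'d::finite. \<Sum>i\<in>I. f i y)"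
  using assms by (induction I rule: finite_induct) (simp_all add: is_poly_deg_zero is_poly_deg_add)

lemma is_poly_deg_le:
  assumes "is_poly_deg a P" "a \<le> b"
  shows "is_poly_deg b (P :: real^'d::finite \<Rightarrow> real)"
proof -
  obtain c where "P = polyfun a c" using assms(1) by (auto simp: is_poly_deg_def)
  moreover have "is_poly_deg b (\<lambda>y. \<Sum>\<alpha>\<in>midx a. c \<alpha> * mono \<alpha> y)"
    using assms(2) by (intro is_poly_deg_sum is_poly_deg_cmult is_poly_deg_monomial finite_midx)
      (auto simp: midx_def)
  ultimately show ?thesis by (simp add: polyfun_def[abs_def])
qed

lemma is_poly_deg_mult:
  assumes "is_poly_deg a P" "is_poly_deg b Q"
  shows "is_poly_deg (a + b) (\<lambda>y::real^'d::finite. P y * Q y)"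
proof -
  obtain c d where "P = polyfun a c" "Q = polyfun b d" using assms by (auto simp: is_poly_deg_def)
  then have "(\<lambda>y. P y * Q y)
      = (\<lambda>y. \<Sum>\<alpha>\<in>midx a. \<Sum>\<beta>\<in>midx b. (c \<alpha> * d \<beta>) * mono (\<lambda>i. \<alpha> i + \<beta> i) y)"
    by (simp add: fun_eq_iff polyfun_def sum_product mono_add mult_ac)
  moreover have "is_poly_deg (a + b)
      (\<lambda>y. \<Sum>\<alpha>\<in>midx a. \<Sum>\<beta>\<in>midx b. (c \<alpha> * d \<beta>) * mono (\<lambda>i. \<alpha> i + \<beta> i) y)"
    by (intro is_poly_deg_sum is_poly_deg_cmult is_poly_deg_monomial finite_midx)
      (auto simp: midx_def sum.distrib)
  ultimately show ?thesis by simp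
qed

lemma is_poly_deg_const: "is_poly_deg n (\<lambda>y::real^'d::finite. a)"
  using is_poly_deg_cmult[OF is_poly_deg_monomial[of "\<lambda>_. 0" n], of a] by simp

lemma is_poly_deg_prod:
  assumes "finite I" "\<And>j. j \<in> I \<Longrightarrow> is_poly_deg (d j) (f j)"
  shows "is_poly_deg (\<Sum>j\<in>I. d j) (\<lambda>y::real^'d::finite. \<Prod>j\<in>I. f j y)"
  using assms by (induction I rule: finite_induct) (simp_all add: is_poly_deg_const is_poly_deg_mult)

lemma is_poly_deg_power:
  assumes "is_poly_deg a P"
  shows "is_poly_deg (a * m) (\<lambda>y::real^'d::finite. P y ^ m)"
proof (induction m)
  case 0
  then show ?case by (simp add: is_poly_deg_const)
next
  case (Suc m)
  then show ?case using is_poly_deg_mult[OF assms Suc] by (simp add: add.commute)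
qed

lemma is_poly_deg_affine_coord: "is_poly_deg 1 (\<lambda>z::real^'d::finite. a * z $ j + b)"
  using is_poly_deg_add[OF is_poly_deg_cmult[OF is_poly_deg_monomial] is_poly_deg_const,
      of "\<lambda>i. if i = j then 1 else 0" 1 a b]
  by (simp add: mono_unit)

lemma is_poly_deg_rescale:
  assumes "is_poly_deg k P"
  shows "is_poly_deg k (\<lambda>z::real^'d::finite. P (t *\<^sub>R (z - x)))"
proof -
  obtain c where P: "P = polyfun k c" using assms by (auto simp: is_poly_deg_def)
  have "is_poly_deg k (\<lambda>z. mono \<alpha> (t *\<^sub>R (z - x)))" if "\<alpha> \<in> midx k" for \<alpha>
  proof -
    have "is_poly_deg (\<Sum>i\<in>UNIV. 1 * \<alpha> i)
        (\<lambda>z::real^'d. \<Prod>i\<in>UNIV. (t * z $ i + - (t * x $ i)) ^ \<alpha> i)"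
      by (intro is_poly_deg_prod is_poly_deg_power is_poly_deg_affine_coord) auto
    then have "is_poly_deg k (\<lambda>z::real^'d. \<Prod>i\<in>UNIV. (t * z $ i + - (t * x $ i)) ^ \<alpha> i)"
      by (rule is_poly_deg_le) (use that in \<open>simp add: midx_def\<close>)
    then show ?thesis by (simp add: mono_def right_diff_distrib)
  qed
  then have "is_poly_deg k (\<lambda>z. \<Sum>\<alpha>\<in>midx k. c \<alpha> * mono \<alpha> (t *\<^sub>R (z - x)))"
    by (intro is_poly_deg_sum is_poly_deg_cmult finite_midx)
  then show ?thesis by (simp add: P polyfun_def)
qed

subsection \<open>Partial derivatives and forward differences\<close>

definition partial :: "'d::finite \<Rightarrow> (real^'d \<Rightarrow> real) \<Rightarrow> real^'d \<Rightarrow> real" where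
  "partial i f z = deriv (\<lambda>t. f (z + t *\<^sub>R axis i 1)) 0"

definition fwd_diff :: "real \<Rightarrow> 'd::finite \<Rightarrow> (real^'d \<Rightarrow> real) \<Rightarrow> real^'d \<Rightarrow> real" where
  "fwd_diff h i f z = f (z + h *\<^sub>R axis i 1) - f z"

definition inc_at :: "'d \<Rightarrow> ('d \<Rightarrow> nat) \<Rightarrow> 'd \<Rightarrow> nat" where
  "inc_at i \<alpha> = \<alpha>(i := Suc (\<alpha> i))"

definition dec_at :: "'d \<Rightarrow> ('d \<Rightarrow> nat) \<Rightarrow> 'd \<Rightarrow> nat" where
  "dec_at i \<alpha> = \<alpha>(i := \<alpha> i - 1)"

lemma grad_nth: "grad P x $ i = partial i P x"
  by (simp add: grad_def partial_def)

lemma sum_fun_upd: "sum (\<alpha>(i := v)) (UNIV::'d::finite set) + \<alpha> i = sum \<alpha> UNIV + v"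
proof -
  have "sum (\<alpha>(i := v)) (UNIV::'d set) = v + sum \<alpha> (UNIV - {i})"
    by (subst sum.remove[of UNIV i]) (auto intro!: sum.cong)
  then show ?thesis using sum.remove[of UNIV i \<alpha>] by (simp add: add_ac)
qed

lemma mono_split_coord: "mono \<alpha> y = (y $ i) ^ \<alpha> i * (\<Prod>j\<in>UNIV - {i}. (y $ j) ^ \<alpha> j)"
  unfolding mono_def by (subst prod.remove[of UNIV i]) auto

lemma mono_fun_upd: "mono (\<alpha>(i := v)) y = (y $ i) ^ v * (\<Prod>j\<in>UNIV - {i}. (y $ j) ^ \<alpha> j)"
  by (subst mono_split_coord[of _ _ i]) (auto intro!: prod.cong)

lemma mono_add_axis:
  "mono \<alpha> (y + t *\<^sub>R axis i 1) = (y $ i + t) ^ \<alpha> i * (\<Prod>j\<in>UNIV - {i}. (y $ j) ^ \<alpha> j)"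
  by (subst mono_split_coord[of _ _ i]) (auto simp: axis_def intro!: prod.cong)

lemma mono_has_real_derivative_axis:
  "((\<lambda>t. mono \<alpha> (y + t *\<^sub>R axis i 1)) has_real_derivative of_nat (\<alpha> i) * mono (dec_at i \<alpha>) y) (at 0)"
proof -
  define R where "R = (\<Prod>j\<in>UNIV - {i}. (y $ j) ^ \<alpha> j)"
  have "((\<lambda>t. (y $ i + t) ^ \<alpha> i * R) has_real_derivative of_nat (\<alpha> i) * ((y $ i) ^ (\<alpha> i - 1) * R)) (at 0)"
    by (auto intro!: derivative_eq_intros)
  then show ?thesis by (simp add: mono_add_axis mono_fun_upd dec_at_def R_def)
qed

lemma polyfun_has_real_derivative_axis:
  "((\<lambda>t. polyfun n c (y + t *\<^sub>R axis i 1)) has_real_derivative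
     (\<Sum>\<alpha>\<in>midx n. c \<alpha> * (of_nat (\<alpha> i) * mono (dec_at i \<alpha>) y))) (at 0)"
  unfolding polyfun_def by (intro DERIV_sum DERIV_cmult mono_has_real_derivative_axis)

lemma partial_polyfun:
  "partial i (polyfun n c) y = (\<Sum>\<alpha>\<in>midx n. c \<alpha> * (of_nat (\<alpha> i) * mono (dec_at i \<alpha>) y))"
  unfolding partial_def by (rule DERIV_imp_deriv[OF polyfun_has_real_derivative_axis])

text \<open>Differentiating lowers every multi-index: \<open>inc_at i\<close> and \<open>dec_at i\<close> are inverse
  bijections between \<open>midx n\<close> and the indices in \<open>midx (Suc n)\<close> with positive \<open>i\<close>-th entry.\<close>

lemma sum_midx_Suc_dec_at:
  "(\<Sum>\<alpha>\<in>midx (Suc n). c \<alpha> * (of_nat (\<alpha> i) * mono (dec_at i \<alpha>) y))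
   = polyfun n (\<lambda>\<beta>. of_nat (Suc (\<beta> i)) * c (inc_at i \<beta>)) (y::real^'d::finite)"
proof -
  let ?T = "{\<alpha>\<in>midx (Suc n). 0 < \<alpha> i}"
  have "(\<Sum>\<alpha>\<in>midx (Suc n). c \<alpha> * (of_nat (\<alpha> i) * mono (dec_at i \<alpha>) y))
      = (\<Sum>\<alpha>\<in>?T. c \<alpha> * (of_nat (\<alpha> i) * mono (dec_at i \<alpha>) y))"
    by (rule sum.mono_neutral_right) (auto simp: finite_midx)
  also have "\<dots> = (\<Sum>\<beta>\<in>midx n. of_nat (Suc (\<beta> i)) * c (inc_at i \<beta>) * mono \<beta> y)"
  proof (rule sum.reindex_bij_witness[where j="dec_at i" and i="inc_at i"])
    fix \<beta> :: "'d \<Rightarrow> nat" assume "\<beta> \<in> midx n"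
    then show "dec_at i (inc_at i \<beta>) = \<beta>" "inc_at i \<beta> \<in> ?T"
      using sum_fun_upd[of \<beta> i "Suc (\<beta> i)"] by (auto simp: dec_at_def inc_at_def midx_def)
  next
    fix \<alpha> :: "'d \<Rightarrow> nat" assume \<alpha>: "\<alpha> \<in> ?T"
    then show "inc_at i (dec_at i \<alpha>) = \<alpha>" by (auto simp: dec_at_def inc_at_def)
    show "dec_at i \<alpha> \<in> midx n"
      using \<alpha> sum_fun_upd[of \<alpha> i "\<alpha> i - 1"] by (auto simp: dec_at_def midx_def)
    show "of_nat (Suc (dec_at i \<alpha> i)) * c (inc_at i (dec_at i \<alpha>)) * mono (dec_at i \<alpha>) y
        = c \<alpha> * (of_nat (\<alpha> i) * mono (dec_at i \<alpha>) y)"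
      using \<alpha> by (auto simp: dec_at_def inc_at_def)
  qed
  finally show ?thesis by (simp add: polyfun_def)
qed

lemma partial_polyfun_Suc:
  "partial i (polyfun (Suc n) c) = polyfun n (\<lambda>\<beta>. of_nat (Suc (\<beta> i)) * c (inc_at i \<beta>))"
  by (simp add: fun_eq_iff partial_polyfun sum_midx_Suc_dec_at)

lemma is_poly_deg_partial:
  assumes "is_poly_deg k P"
  shows "is_poly_deg k (partial i P)"
proof -
  obtain c where P: "P = polyfun k c" using assms by (auto simp: is_poly_deg_def)
  show ?thesis
  proof (cases k)
    case 0
    then have "partial i P = (\<lambda>y. 0)" by (simp add: fun_eq_iff P partial_polyfun midx_0)
    then show ?thesis by (simp add: is_poly_deg_zero)
  next
    case (Suc n)
    have "is_poly_deg n (partial i P)" by (simp add: P Suc partial_polyfun_Suc)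
    then show ?thesis by (rule is_poly_deg_le) (simp add: Suc)
  qed
qed

lemma power_add_sub_power:
  fixes u h :: real
  shows "(u + h) ^ a - u ^ a
    = of_nat a * h * u ^ (a - 1) + (\<Sum>l<a - 1. of_nat (a choose l) * h ^ (a - l) * u ^ l)"
proof (cases "a < 2")
  case True
  then consider "a = 0" | "a = 1" by linarith
  then show ?thesis by cases simp_all
next
  case False
  then obtain m where a: "a = Suc (Suc m)" by (metis add_2_eq_Suc le_Suc_ex not_less)
  have "(u + h) ^ a = (\<Sum>l\<le>a. of_nat (a choose l) * u ^ l * h ^ (a - l))"
    by (rule binomial_ring)
  also have "\<dots> = (\<Sum>l<a - 1. of_nat (a choose l) * u ^ l * h ^ (a - l))
      + of_nat a * u ^ (a - 1) * h + u ^ a"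
    by (simp add: a lessThan_Suc_atMost[symmetric] del: lessThan_Suc_atMost)
  finally show ?thesis by (simp add: mult_ac)
qed

lemma mono_add_axis_sub:
  "mono \<alpha> (y + h *\<^sub>R axis i 1) - mono \<alpha> y = of_nat (\<alpha> i) * h * mono (dec_at i \<alpha>) y
    + (\<Sum>l<\<alpha> i - 1. of_nat (\<alpha> i choose l) * h ^ (\<alpha> i - l) * mono (\<alpha>(i := l)) y)"
proof -
  define R where "R = (\<Prod>j\<in>UNIV - {i}. (y $ j) ^ \<alpha> j)"
  have "mono \<alpha> (y + h *\<^sub>R axis i 1) - mono \<alpha> y = ((y $ i + h) ^ \<alpha> i - (y $ i) ^ \<alpha> i) * R"
    by (simp add: mono_add_axis mono_split_coord[of \<alpha> y i] R_def algebra_simps)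
  also have "\<dots> = of_nat (\<alpha> i) * h * ((y $ i) ^ (\<alpha> i - 1) * R)
      + (\<Sum>l<\<alpha> i - 1. of_nat (\<alpha> i choose l) * h ^ (\<alpha> i - l) * ((y $ i) ^ l * R))"
    by (simp add: power_add_sub_power ring_distribs sum_distrib_left sum_distrib_right mult_ac)
  finally show ?thesis by (simp add: mono_fun_upd dec_at_def R_def)
qed

subsection \<open>Top-degree coefficients\<close>

definition deg_below :: "nat \<Rightarrow> (real^'d::finite \<Rightarrow> real) \<Rightarrow> bool" where
  "deg_below n P \<longleftrightarrow> (\<exists>d. P = polyfun n d \<and> (\<forall>\<beta>. sum \<beta> UNIV = n \<longrightarrow> d \<beta> = 0))"

lemma deg_below_zero: "deg_below n (\<lambda>y. 0)"
  by (auto simp: deg_below_def fun_eq_iff polyfun_zero intro!: exI[of _ "\<lambda>_. 0"])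

lemma deg_below_add:
  assumes "deg_below n P" "deg_below n Q"
  shows "deg_below n (\<lambda>y. P y + Q y)"
  using assms unfolding deg_below_def by (fastforce simp: fun_eq_iff polyfun_add)

lemma deg_below_cmult:
  assumes "deg_below n P"
  shows "deg_below n (\<lambda>y. a * P y)"
  using assms unfolding deg_below_def by (fastforce simp: fun_eq_iff polyfun_cmult)

lemma deg_below_sum:
  assumes "finite I" "\<And>i. i \<in> I \<Longrightarrow> deg_below n (f i)"
  shows "deg_below n (\<lambda>y. \<Sum>i\<in>I. f i y)"
  using assms by (induction I rule: finite_induct) (simp_all add: deg_below_zero deg_below_add)

lemma deg_below_monomial: "sum \<gamma> UNIV < n \<Longrightarrow> deg_below n (mono \<gamma>)"
  unfolding deg_below_def
  by (rule exI[of _ "\<lambda>\<beta>. if \<beta> = \<gamma> then 1 else 0"]) (auto simp: polyfun_delta)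

text \<open>The only property of \<open>partial\<close> and \<open>fwd_diff h\<close> needed to read off top-degree
  coefficients: up to the factor \<open>f\<close>, they act on them like a partial derivative.\<close>

definition acts_on_top_as_partial ::
    "('d \<Rightarrow> (real^'d::finite \<Rightarrow> real) \<Rightarrow> real^'d \<Rightarrow> real) \<Rightarrow> real \<Rightarrow> bool" where
  "acts_on_top_as_partial Op f \<longleftrightarrow> (\<forall>i n c. \<exists>c'. Op i (polyfun (Suc n) c) = polyfun n c' \<and>
     (\<forall>\<beta>. sum \<beta> UNIV = n \<longrightarrow> c' \<beta> = f * of_nat (Suc (\<beta> i)) * c (inc_at i \<beta>)))"

lemma acts_on_top_as_partial_partial: "acts_on_top_as_partial partial 1"
  unfolding acts_on_top_as_partial_def by (auto simp: partial_polyfun_Suc)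

lemma acts_on_top_as_partial_fwd_diff: "acts_on_top_as_partial (fwd_diff h :: 'd::finite \<Rightarrow> _) h"
  unfolding acts_on_top_as_partial_def
proof (intro allI)
  fix i n and c :: "('d \<Rightarrow> nat) \<Rightarrow> real"
  define Rem where "Rem = (\<lambda>y::real^'d. \<Sum>\<alpha>\<in>midx (Suc n). c \<alpha> *
      (\<Sum>l<\<alpha> i - 1. of_nat (\<alpha> i choose l) * h ^ (\<alpha> i - l) * mono (\<alpha>(i := l)) y))"
  have "deg_below n Rem"
    unfolding Rem_def
  proof (intro deg_below_sum deg_below_cmult finite_midx finite_lessThan)
    fix \<alpha> l assume "\<alpha> \<in> midx (Suc n)" "l \<in> {..<\<alpha> i - 1}"
    then have "sum (\<alpha>(i := l)) UNIV < n"
      using sum_fun_upd[of \<alpha> i l] by (auto simp: midx_def)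
    then show "deg_below n (mono (\<alpha>(i := l)))" by (rule deg_below_monomial)
  qed
  then obtain d where d: "Rem = polyfun n d" "\<forall>\<beta>. sum \<beta> UNIV = n \<longrightarrow> d \<beta> = 0"
    by (auto simp: deg_below_def)
  let ?c' = "\<lambda>\<beta>. h * (of_nat (Suc (\<beta> i)) * c (inc_at i \<beta>)) + d \<beta>"
  have "fwd_diff h i (polyfun (Suc n) c) y = polyfun n ?c' y" for y
  proof -
    have "fwd_diff h i (polyfun (Suc n) c) y
        = (\<Sum>\<alpha>\<in>midx (Suc n). c \<alpha> * (mono \<alpha> (y + h *\<^sub>R axis i 1) - mono \<alpha> y))"
      by (simp add: fwd_diff_def polyfun_def sum_subtractf right_diff_distrib)
    also have "\<dots> = h * (\<Sum>\<alpha>\<in>midx (Suc n). c \<alpha> * (of_nat (\<alpha> i) * mono (dec_at i \<alpha>) y)) + Rem y"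
      by (simp add: mono_add_axis_sub Rem_def distrib_left sum.distrib sum_distrib_left mult_ac)
    also have "\<dots> = polyfun n ?c' y"
      by (simp add: sum_midx_Suc_dec_at d(1) polyfun_cmult polyfun_add)
    finally show ?thesis .
  qed
  then show "\<exists>c'. fwd_diff h i (polyfun (Suc n) c) = polyfun n c' \<and>
      (\<forall>\<beta>. sum \<beta> UNIV = n \<longrightarrow> c' \<beta> = h * of_nat (Suc (\<beta> i)) * c (inc_at i \<beta>))"
    using d(2) by (intro exI[of _ ?c']) auto
qed

text \<open>A multi-index \<open>\<alpha>\<close> is encoded by a list of coordinates in which \<open>i\<close> occurs \<open>\<alpha> i\<close>
  times, so that \<open>\<partial>\<^sup>\<alpha>\<close> becomes \<open>fold partial s\<close>.\<close>

lemma sum_count_list_UNIV: "sum (count_list s) (UNIV::'d::finite set) = length s"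
  by (simp add: sum_count_set)

lemma count_list_Cons_inc_at: "count_list (i # s) = inc_at i (count_list s)"
  by (auto simp: inc_at_def fun_eq_iff)

lemma ex_list_count_list:
  assumes "sum \<alpha> (UNIV::'d::finite set) = n"
  shows "\<exists>s. length s = n \<and> count_list s = \<alpha>"
  using assms
proof (induction n arbitrary: \<alpha>)
  case 0
  then show ?case by (intro exI[of _ "[]"]) (auto simp: fun_eq_iff)
next
  case (Suc n)
  then obtain i where i: "\<alpha> i > 0" by (metis gr0I sum.neutral_const sum.cong nat.distinct(1))
  have "sum (\<alpha>(i := \<alpha> i - 1)) (UNIV::'d set) = n"
    using sum_fun_upd[of \<alpha> i "\<alpha> i - 1"] Suc.prems i by simp
  then obtain s where s: "length s = n" "count_list s = \<alpha>(i := \<alpha> i - 1)" using Suc.IH by blast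
  then have "count_list (i # s) = \<alpha>" using i by (auto simp: count_list_Cons_inc_at inc_at_def fun_eq_iff)
  then show ?case using s by (intro exI[of _ "i # s"]) auto
qed

lemma prod_fact_count_list_Cons:
  "(\<Prod>j\<in>UNIV. fact (count_list (i # s) j) :: real)
    = of_nat (Suc (count_list s i)) * (\<Prod>j\<in>(UNIV::'d::finite set). fact (count_list s j))"
proof -
  have "(\<Prod>j\<in>UNIV - {i}. fact (count_list (i # s) j) :: real) = (\<Prod>j\<in>UNIV - {i}. fact (count_list s j))"
    by (rule prod.cong) auto
  then have "(\<Prod>j\<in>UNIV. fact (count_list (i # s) j) :: real)
      = fact (Suc (count_list s i)) * (\<Prod>j\<in>UNIV - {i}. fact (count_list s j))"
    by (subst prod.remove[of UNIV i]) auto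
  also have "\<dots> = of_nat (Suc (count_list s i)) * (\<Prod>j\<in>UNIV. fact (count_list s j))"
    by (simp add: prod.remove[of UNIV i "\<lambda>j. fact (count_list s j)"])
  finally show ?thesis .
qed

lemma fold_top_coeff:
  assumes "acts_on_top_as_partial Op f"
  shows "fold Op s (polyfun (length s) c)
    = (\<lambda>y. f ^ length s * (\<Prod>j\<in>UNIV. fact (count_list s j)) * c (count_list s))"
proof (induction s arbitrary: c)
  case Nil
  then show ?case by (simp add: fun_eq_iff polyfun_0)
next
  case (Cons i s)
  obtain c' where c': "Op i (polyfun (Suc (length s)) c) = polyfun (length s) c'"
    "\<forall>\<beta>. sum \<beta> UNIV = length s \<longrightarrow> c' \<beta> = f * of_nat (Suc (\<beta> i)) * c (inc_at i \<beta>)"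
    using assms unfolding acts_on_top_as_partial_def by blast
  have "c' (count_list s) = f * of_nat (Suc (count_list s i)) * c (count_list (i # s))"
    using c'(2) by (simp add: sum_count_list_UNIV count_list_Cons_inc_at)
  then show ?case
    using Cons[of c'] by (simp add: c'(1) prod_fact_count_list_Cons mult_ac del: count_list.simps)
qed

lemma partial_rescale:
  assumes "is_poly_deg n P"
  shows "partial i (\<lambda>z. a * P (t *\<^sub>R (z - x))) z = a * t * partial i P (t *\<^sub>R (z - x))"
proof -
  obtain c where P: "P = polyfun n c" using assms by (auto simp: is_poly_deg_def)
  define w where "w = t *\<^sub>R (z - x)"
  define g where "g = (\<lambda>s. P (w + s *\<^sub>R axis i 1))"
  have "(g has_real_derivative partial i P w) (at (t * 0))"
    unfolding g_def P partial_polyfun by (simp add: polyfun_has_real_derivative_axis)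
  from DERIV_chain2[OF this DERIV_cmult_Id]
  have "((\<lambda>s. a * g (t * s)) has_real_derivative a * (partial i P w * t)) (at 0)"
    by (rule DERIV_cmult)
  moreover have "(\<lambda>s. a * P (t *\<^sub>R (z + s *\<^sub>R axis i 1 - x))) = (\<lambda>s. a * g (t * s))"
    by (simp add: fun_eq_iff g_def w_def algebra_simps)
  ultimately show ?thesis
    unfolding partial_def[of i "\<lambda>z. a * P (t *\<^sub>R (z - x))"] by (simp add: DERIV_imp_deriv w_def)
qed

lemma fold_partial_rescale:
  assumes "is_poly_deg n P"
  shows "fold partial s (\<lambda>z. a * P (t *\<^sub>R (z - x)))
    = (\<lambda>z. a * t ^ length s * fold partial s P (t *\<^sub>R (z - x)))"
  using assms
proof (induction s arbitrary: a P)
  case Nil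
  then show ?case by simp
next
  case (Cons i s)
  have "partial i (\<lambda>z. a * P (t *\<^sub>R (z - x))) = (\<lambda>z. (a * t) * partial i P (t *\<^sub>R (z - x)))"
    using partial_rescale[OF Cons.prems] by auto
  then show ?case using Cons.IH[OF is_poly_deg_partial[OF Cons.prems], of "a * t"] by (simp add: mult_ac)
qed

subsection \<open>Iterating the local Markov inequality\<close>

definition local_markov :: "(real^'d::finite) set \<Rightarrow> nat \<Rightarrow> real \<Rightarrow> real \<Rightarrow> bool" where
  "local_markov K k \<epsilon>0 C \<longleftrightarrow> (\<forall>P \<epsilon> x0. is_poly_deg k P \<and> 0 < \<epsilon> \<and> \<epsilon> < \<epsilon>0 \<and> x0 \<in> K \<longrightarrow>
     norm (grad P x0) \<le> C / \<epsilon> * Sup {\<bar>P y\<bar> | y. y \<in> cball x0 \<epsilon> \<inter> K})"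

lemma LMI1_local_markov:
  assumes "LMI1 K"
  obtains \<epsilon>0 C where "\<epsilon>0 > 0" "\<And>k. C k \<ge> 1" "\<And>k. local_markov K k \<epsilon>0 (C k)"
  using assms unfolding LMI1_def local_markov_def by blast

lemma partial_bound_local_markov:
  assumes "local_markov K k \<epsilon>0 C" "C \<ge> 0" "0 < \<delta>" "\<delta> < \<epsilon>0"
    and "is_poly_deg k Q" "y \<in> K" "\<forall>z\<in>K \<inter> cball y \<delta>. \<bar>Q z\<bar> \<le> M"
  shows "\<bar>partial i Q y\<bar> \<le> C / \<delta> * M"
proof -
  have "Sup {\<bar>Q z\<bar> | z. z \<in> cball y \<delta> \<inter> K} \<le> M"
    using assms(3,6,7) by (intro cSup_least) force+
  then have "C / \<delta> * Sup {\<bar>Q z\<bar> | z. z \<in> cball y \<delta> \<inter> K} \<le> C / \<delta> * M"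
    using assms(2,3) by (intro mult_left_mono) auto
  moreover have "norm (grad Q y) \<le> C / \<delta> * Sup {\<bar>Q z\<bar> | z. z \<in> cball y \<delta> \<inter> K}"
    using assms(1,3-6) by (auto simp: local_markov_def)
  moreover have "\<bar>partial i Q y\<bar> \<le> norm (grad Q y)"
    using component_le_norm_cart[of "grad Q y" i] by (simp add: grad_nth)
  ultimately show ?thesis by linarith
qed

lemma fold_partial_bound_local_markov:
  assumes "local_markov K k \<epsilon>0 C" "C \<ge> 0" "0 < \<delta>" "\<delta> < \<epsilon>0"
    and "is_poly_deg k Q" "x0 \<in> K" "\<forall>y\<in>K \<inter> cball x0 (real (length s) * \<delta>). \<bar>Q y\<bar> \<le> M"
  shows "\<bar>fold partial s Q x0\<bar> \<le> (C / \<delta>) ^ length s * M"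
  using assms(5,7)
proof (induction s arbitrary: Q M)
  case Nil
  then show ?case using assms(6) by simp
next
  case (Cons i s)
  have "\<bar>partial i Q y\<bar> \<le> C / \<delta> * M" if y: "y \<in> K \<inter> cball x0 (real (length s) * \<delta>)" for y
  proof (rule partial_bound_local_markov[OF assms(1-4) Cons.prems(1)])
    show "\<forall>z\<in>K \<inter> cball y \<delta>. \<bar>Q z\<bar> \<le> M"
    proof
      fix z assume z: "z \<in> K \<inter> cball y \<delta>"
      then have "dist x0 z \<le> length (i # s) * \<delta>"
        using y dist_triangle[of x0 z y] by (simp add: dist_commute algebra_simps)
      then show "\<bar>Q z\<bar> \<le> M" using Cons.prems(2) z by auto
    qed
  qed (use y in auto)
  then have "\<bar>fold partial s (partial i Q) x0\<bar> \<le> (C / \<delta>) ^ length s * (C / \<delta> * M)"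
    by (intro Cons.IH is_poly_deg_partial Cons.prems(1)) auto
  then show ?case by (simp add: mult_ac)
qed

lemma fold_fwd_diff_bound:
  assumes "0 \<le> h" "\<forall>y\<in>cball p (real (length s) * h). \<bar>f y\<bar> \<le> M"
  shows "\<bar>fold (fwd_diff h) s f p\<bar> \<le> 2 ^ length s * M"
  using assms(2)
proof (induction s arbitrary: f M)
  case Nil
  then show ?case by simp
next
  case (Cons i s)
  have "\<bar>fwd_diff h i f y\<bar> \<le> 2 * M" if y: "y \<in> cball p (real (length s) * h)" for y
  proof -
    have "dist p (y + h *\<^sub>R axis i 1) \<le> dist p y + h"
      using dist_triangle[of p "y + h *\<^sub>R axis i 1" y] assms(1) by (simp add: dist_norm)
    then have "y + h *\<^sub>R axis i 1 \<in> cball p (real (length (i # s)) * h)"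
      "y \<in> cball p (real (length (i # s)) * h)"
      using y assms(1) by (auto simp: algebra_simps)
    then have "\<bar>f (y + h *\<^sub>R axis i 1)\<bar> \<le> M" "\<bar>f y\<bar> \<le> M" using Cons.prems by auto
    then show ?thesis by (simp add: fwd_diff_def)
  qed
  then show ?case using Cons.IH[of "fwd_diff h i f" "2 * M"] by (simp add: mult_ac)
qed

lemma zero_in_Aset: "x \<in> K \<Longrightarrow> 0 \<in> Aset K x \<epsilon>"
  by (force simp: Aset_def)

lemma local_top_coeff_bound:
  assumes markov: "local_markov K k \<epsilon>0 C" and C: "C \<ge> 0" and \<epsilon>: "0 < \<epsilon>" and x: "x \<in> K"
    and r: "0 < r" and small: "r * \<epsilon> < (k + 1) * \<epsilon>0"
    and bound: "\<forall>y\<in>Aset K x \<epsilon>. norm y \<le> r \<longrightarrow> \<bar>polyfun k c y\<bar> \<le> M"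
    and \<alpha>: "sum \<alpha> UNIV = k"
  shows "\<bar>c \<alpha>\<bar> \<le> (C * (k + 1)) ^ k * M / r ^ k"
proof -
  obtain s where s: "length s = k" "count_list s = \<alpha>" using ex_list_count_list[OF \<alpha>] by blast
  define F :: real where "F = (\<Prod>j\<in>UNIV. fact (count_list s j))"
  have F: "1 \<le> F" by (simp add: F_def prod_ge_1)
  define \<delta> where "\<delta> = r * \<epsilon> / (k + 1)"
  have \<delta>: "0 < \<delta>" "\<delta> < \<epsilon>0" "k * \<delta> \<le> r * \<epsilon>"
    using \<epsilon> r small by (auto simp: \<delta>_def field_simps)
  \<comment> \<open>\<open>Q\<close> is \<open>P\<close> in the original coordinates, where LMI applies at \<open>x\<close> at the scale \<open>\<delta>\<close>.\<close>
  define Q where "Q = (\<lambda>z. polyfun k c ((1/\<epsilon>) *\<^sub>R (z - x)))"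
  have "\<bar>Q z\<bar> \<le> M" if z: "z \<in> K \<inter> cball x (real (length s) * \<delta>)" for z
  proof -
    have "norm (z - x) \<le> r * \<epsilon>" using z s \<delta>(3) by (auto simp: dist_norm norm_minus_commute)
    then have "norm ((1/\<epsilon>) *\<^sub>R (z - x)) \<le> r" using \<epsilon> by (simp add: divide_le_eq mult.commute)
    moreover have "(1/\<epsilon>) *\<^sub>R (z - x) \<in> Aset K x \<epsilon>" using z by (auto simp: Aset_def)
    ultimately show ?thesis using bound by (simp add: Q_def)
  qed
  then have "\<bar>fold partial s Q x\<bar> \<le> (C / \<delta>) ^ length s * M"
    by (intro fold_partial_bound_local_markov[OF markov C \<delta>(1,2) _ x])
      (auto simp: Q_def is_poly_deg_rescale)
  moreover have "fold partial s Q x = (1/\<epsilon>) ^ k * (F * c \<alpha>)"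
  proof -
    have "fold partial s (\<lambda>z. 1 * polyfun k c ((1/\<epsilon>) *\<^sub>R (z - x)))
        = (\<lambda>z. 1 * (1/\<epsilon>) ^ length s * fold partial s (polyfun k c) ((1/\<epsilon>) *\<^sub>R (z - x)))"
      by (rule fold_partial_rescale[OF is_poly_deg_polyfun])
    from fun_cong[OF this, of x]
    have "fold partial s Q x = (1/\<epsilon>) ^ length s * fold partial s (polyfun k c) 0"
      by (simp add: Q_def)
    then show ?thesis
      using fold_top_coeff[OF acts_on_top_as_partial_partial, of s c] s by (simp add: F_def)
  qed
  ultimately have "F * \<bar>c \<alpha>\<bar> \<le> (\<epsilon> * (C / \<delta>)) ^ k * M"
    using \<epsilon> s F by (simp add: abs_mult power_one_over power_mult_distrib field_simps)
  moreover have "\<bar>c \<alpha>\<bar> \<le> F * \<bar>c \<alpha>\<bar>"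
    using F by (simp add: mult_le_cancel_right1)
  moreover have "(\<epsilon> * (C / \<delta>)) ^ k * M = (C * (k + 1)) ^ k * M / r ^ k"
    using \<epsilon> r by (simp add: \<delta>_def power_divide)
  ultimately show ?thesis by linarith
qed

lemma shell_top_coeff_bound:
  fixes K :: "(real^'d::finite) set"
  assumes \<epsilon>: "0 < \<epsilon>" and r: "4 / \<epsilon> \<le> r"
    and bound: "\<forall>y\<in>Aset K x \<epsilon>. norm y \<le> r \<longrightarrow> \<bar>polyfun k c y\<bar> \<le> M"
    and \<alpha>: "sum \<alpha> UNIV = k"
  shows "\<bar>c \<alpha>\<bar> \<le> (8 * (k + 1)) ^ k * M / r ^ k"
proof -
  obtain s where s: "length s = k" "count_list s = \<alpha>" using ex_list_count_list[OF \<alpha>] by blast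
  define F :: real where "F = (\<Prod>j\<in>UNIV. fact (count_list s j))"
  have F: "1 \<le> F" by (simp add: F_def prod_ge_1)
  have r0: "0 < r" using \<epsilon> r by (meson divide_pos_pos order_less_le_trans zero_less_numeral)
  define h where "h = r / (4 * (k + 1))"
  have h: "0 < h" "k * h \<le> r / 4" using r0 by (auto simp: h_def field_simps)
  \<comment> \<open>All points used by the differences lie in the shell \<open>r/4 \<le> |y| \<le> r\<close>, which is in \<open>Aset\<close>.\<close>
  have "0 \<le> r / 2" using r0 by simp
  then obtain p :: "real^'d" where p: "norm p = r / 2" by (rule vector_choose_size)
  have "\<bar>polyfun k c y\<bar> \<le> M" if y: "y \<in> cball p (real (length s) * h)" for y
  proof -
    have "norm (p - y) \<le> r / 4" using y s h by (simp add: dist_norm)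
    moreover have "norm p - norm y \<le> norm (p - y)" "norm y - norm p \<le> norm (p - y)"
      using norm_triangle_ineq2[of p y] norm_triangle_ineq2[of y p] by (simp_all add: norm_minus_commute)
    ultimately have "r / 4 \<le> norm y" "norm y \<le> r" using p r0 by linarith+
    moreover have "1 / \<epsilon> \<le> r / 4" using r by simp
    ultimately have "1 / \<epsilon> \<le> norm y" "norm y \<le> r" by linarith+
    then show ?thesis using bound by (simp add: Aset_def)
  qed
  then have "\<bar>fold (fwd_diff h) s (polyfun k c) p\<bar> \<le> 2 ^ k * M"
    using fold_fwd_diff_bound[of h p s "polyfun k c" M] h s by simp
  moreover have "fold (fwd_diff h) s (polyfun k c) p = h ^ k * (F * c \<alpha>)"
    using fold_top_coeff[OF acts_on_top_as_partial_fwd_diff, of h s c] s by (simp add: F_def)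
  ultimately have "h ^ k * (F * \<bar>c \<alpha>\<bar>) \<le> 2 ^ k * M"
    using h F by (simp add: abs_mult)
  moreover have "h ^ k * \<bar>c \<alpha>\<bar> \<le> h ^ k * (F * \<bar>c \<alpha>\<bar>)"
    using h F by (intro mult_left_mono) (simp_all add: mult_le_cancel_right1)
  ultimately have "\<bar>c \<alpha>\<bar> \<le> (2 / h) ^ k * M"
    using h by (simp add: power_divide field_simps)
  also have "(2 / h) ^ k * M = (8 * (k + 1)) ^ k * M / r ^ k"
    using r0 by (simp add: h_def power_divide)
  finally show ?thesis .
qed

lemma near_top_coeff_bound:
  assumes markov: "local_markov K k \<epsilon>0 C" and \<epsilon>0: "0 < \<epsilon>0" and C: "C \<ge> 0"
    and \<epsilon>: "0 < \<epsilon>" and x: "x \<in> K" and r: "0 < r" and near: "r < 4 / \<epsilon>"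
    and bound: "\<forall>y\<in>Aset K x \<epsilon>. norm y \<le> r \<longrightarrow> \<bar>polyfun k c y\<bar> \<le> M"
    and \<alpha>: "sum \<alpha> UNIV = k"
  shows "\<bar>c \<alpha>\<bar> \<le> (C * (k + 1) * max 1 (8 / ((k + 1) * \<epsilon>0))) ^ k * M / r ^ k"
proof -
  define L where "L = max 1 (8 / ((k + 1) * \<epsilon>0))"
  have L: "0 < L" by (simp add: L_def)
  have M: "0 \<le> M" using bound zero_in_Aset[OF x] r by fastforce
  \<comment> \<open>Shrink the radius until the local Markov inequality applies; this costs the factor \<open>L\<close>.\<close>
  define r' where "r' = min r ((k + 1) * \<epsilon>0 / (2 * \<epsilon>))"
  have A: "0 < (k + 1) * \<epsilon>0" using \<epsilon>0 by simp
  then have r': "0 < r'" "r' \<le> r" using \<epsilon> r by (auto simp: r'_def)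
  have "r' * \<epsilon> \<le> (k + 1) * \<epsilon>0 / (2 * \<epsilon>) * \<epsilon>"
    using \<epsilon> by (intro mult_right_mono) (auto simp: r'_def)
  then have small: "r' * \<epsilon> < (k + 1) * \<epsilon>0" using \<epsilon> A by simp
  have "r \<le> L * r'"
  proof (cases "r \<le> (k + 1) * \<epsilon>0 / (2 * \<epsilon>)")
    case True
    then show ?thesis using r by (simp add: r'_def L_def)
  next
    case False
    then have "8 / ((k + 1) * \<epsilon>0) * r' = 8 / ((k + 1) * \<epsilon>0) * ((k + 1) * \<epsilon>0) / (2 * \<epsilon>)"
      by (simp add: r'_def)
    also have "\<dots> = 4 / \<epsilon>" using A \<epsilon>0 by simp
    finally have "8 / ((k + 1) * \<epsilon>0) * r' = 4 / \<epsilon>" .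
    moreover have "8 / ((k + 1) * \<epsilon>0) * r' \<le> L * r'"
      using r' by (intro mult_right_mono) (auto simp: L_def)
    ultimately show ?thesis using near by linarith
  qed
  have "\<bar>c \<alpha>\<bar> \<le> (C * (k + 1)) ^ k * M / r' ^ k"
    using bound r'(2) by (intro local_top_coeff_bound[OF markov C \<epsilon> x r'(1) small _ \<alpha>]) auto
  also have "\<dots> = (C * (k + 1)) ^ k * M * L ^ k / (L * r') ^ k"
    using L by (simp add: power_mult_distrib)
  also have "\<dots> \<le> (C * (k + 1)) ^ k * M * L ^ k / r ^ k"
    using \<open>r \<le> L * r'\<close> r L C M by (intro divide_left_mono power_mono mult_pos_pos) auto
  finally show ?thesis by (simp add: L_def power_mult_distrib mult_ac)
qed

definition coeff_const :: "nat \<Rightarrow> real \<Rightarrow> real \<Rightarrow> real" where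
  "coeff_const k \<epsilon>0 C = (8 * (k + 1)) ^ k + (C * (k + 1) * max 1 (8 / ((k + 1) * \<epsilon>0))) ^ k"

lemma coeff_const_pos: "C \<ge> 0 \<Longrightarrow> 0 < coeff_const k \<epsilon>0 C"
  by (simp add: coeff_const_def add_pos_nonneg)

lemma top_coeff_bound:
  assumes markov: "local_markov K k \<epsilon>0 C" and \<epsilon>0: "0 < \<epsilon>0" and C: "C \<ge> 0"
    and \<epsilon>: "0 < \<epsilon>" and x: "x \<in> K" and r: "0 < r"
    and bound: "\<forall>y\<in>Aset K x \<epsilon>. norm y \<le> r \<longrightarrow> \<bar>polyfun k c y\<bar> \<le> M"
    and \<alpha>: "sum \<alpha> UNIV = k"
  shows "\<bar>c \<alpha>\<bar> \<le> coeff_const k \<epsilon>0 C * M / r ^ k"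
proof -
  define X where "X = (8 * (k + 1)) ^ k"
  define Y where "Y = (C * (k + 1) * max 1 (8 / ((k + 1) * \<epsilon>0))) ^ k"
  have "0 \<le> X" "0 \<le> Y" using C by (simp_all add: X_def Y_def)
  moreover have "coeff_const k \<epsilon>0 C = X + Y"
    by (simp add: coeff_const_def X_def Y_def add.commute)
  moreover have "0 \<le> M" using bound zero_in_Aset[OF x] r by fastforce
  ultimately have "X * M / r ^ k \<le> coeff_const k \<epsilon>0 C * M / r ^ k"
    "Y * M / r ^ k \<le> coeff_const k \<epsilon>0 C * M / r ^ k"
    using r by (auto intro!: divide_right_mono mult_right_mono)
  moreover have "\<bar>c \<alpha>\<bar> \<le> X * M / r ^ k \<or> \<bar>c \<alpha>\<bar> \<le> Y * M / r ^ k"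
  proof (cases "4 / \<epsilon> \<le> r")
    case True
    then show ?thesis using shell_top_coeff_bound[OF \<epsilon> True bound \<alpha>] by (simp add: X_def)
  next
    case False
    then show ?thesis
      using near_top_coeff_bound[OF markov \<epsilon>0 C \<epsilon> x r _ bound \<alpha>] by (simp add: Y_def)
  qed
  ultimately show ?thesis by linarith
qed

lemma bdd_above_abs_polyfun_norm_le: "bdd_above {\<bar>polyfun k c y\<bar> | y. y \<in> A \<and> norm y \<le> r}"
proof -
  have "continuous_on UNIV (polyfun k c)"
    unfolding polyfun_def[abs_def] mono_def by (intro continuous_intros)
  then have "bounded ((\<lambda>y. \<bar>polyfun k c y\<bar>) ` cball 0 r)"
    by (intro compact_imp_bounded compact_continuous_image continuous_intros)
      (auto elim: continuous_on_subset)
  then show ?thesis by (rule bdd_above_mono[OF bounded_imp_bdd_above]) auto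
qed

lemma card_midx_pos: "0 < card (midx k :: ('d::finite \<Rightarrow> nat) set)"
proof -
  have "(\<lambda>_. 0) \<in> (midx k :: ('d \<Rightarrow> nat) set)" by (simp add: midx_def)
  then show ?thesis using finite_midx card_gt_0_iff by blast
qed

lemma sum_top_coeffs_bound:
  fixes K :: "(real^'d::finite) set"
  assumes "local_markov K k \<epsilon>0 C" "0 < \<epsilon>0" "C \<ge> 0" "0 < \<epsilon>" "x \<in> K" "0 < r"
  shows "(\<Sum>\<alpha>\<in>{\<alpha>. sum \<alpha> UNIV = k}. \<bar>c \<alpha>\<bar>)
    \<le> card (midx k :: ('d \<Rightarrow> nat) set) * coeff_const k \<epsilon>0 C / r ^ k
      * Sup {\<bar>polyfun k c y\<bar> | y. y \<in> Aset K x \<epsilon> \<and> norm y \<le> r}"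
proof -
  define M where "M = Sup {\<bar>polyfun k c y\<bar> | y. y \<in> Aset K x \<epsilon> \<and> norm y \<le> r}"
  have bound: "\<forall>y\<in>Aset K x \<epsilon>. norm y \<le> r \<longrightarrow> \<bar>polyfun k c y\<bar> \<le> M"
    unfolding M_def by (auto intro!: cSup_upper bdd_above_abs_polyfun_norm_le)
  then have "0 \<le> M" using zero_in_Aset[OF assms(5)] assms(6) by fastforce
  have "(\<Sum>\<alpha>\<in>{\<alpha>. sum \<alpha> UNIV = k}. \<bar>c \<alpha>\<bar>)
      \<le> card {\<alpha>::'d \<Rightarrow> nat. sum \<alpha> UNIV = k} * (coeff_const k \<epsilon>0 C * M / r ^ k)"
    by (rule sum_bounded_above) (use top_coeff_bound[OF assms bound] in auto)
  also have "\<dots> \<le> card (midx k :: ('d \<Rightarrow> nat) set) * (coeff_const k \<epsilon>0 C * M / r ^ k)"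
  proof (rule mult_right_mono)
    show "real (card {\<alpha>::'d \<Rightarrow> nat. sum \<alpha> UNIV = k}) \<le> card (midx k :: ('d \<Rightarrow> nat) set)"
      using card_mono[OF finite_midx, of "{\<alpha>::'d \<Rightarrow> nat. sum \<alpha> UNIV = k}" k] by (auto simp: midx_def)
    show "0 \<le> coeff_const k \<epsilon>0 C * M / r ^ k"
      using \<open>0 \<le> M\<close> coeff_const_pos[OF assms(3), of k \<epsilon>0] assms(6) by simp
  qed
  finally show ?thesis by (simp add: M_def)
qed

theorem lemma7:
  fixes K :: "(real^'d::finite) set"
  assumes "compact K" and "LMI1 K"
  shows "\<forall>k. \<exists>C>0. \<forall>\<epsilon> x r c. 0 < \<epsilon> \<and> \<epsilon> < 1 \<and> x \<in> frontier K \<and> r > 0 \<longrightarrow>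
           (\<Sum>\<alpha>\<in>{\<alpha>. sum \<alpha> UNIV = k}. \<bar>c \<alpha>\<bar>)
             \<le> C / r ^ k * Sup {\<bar>polyfun k c y\<bar> | y. y \<in> Aset K x \<epsilon> \<and> norm y \<le> r}"
proof
  fix k
  obtain \<epsilon>0 C where \<epsilon>0: "0 < \<epsilon>0" and C: "\<And>k. 1 \<le> C k" and markov: "\<And>k. local_markov K k \<epsilon>0 (C k)"
    using LMI1_local_markov[OF assms(2)] by blast
  have C0: "0 \<le> C k" using C[of k] by simp
  have "frontier K \<subseteq> K"
    using assms(1) by (simp add: compact_imp_closed frontier_subset_closed)
  then show "\<exists>B>0. \<forall>\<epsilon> x r c. 0 < \<epsilon> \<and> \<epsilon> < 1 \<and> x \<in> frontier K \<and> r > 0 \<longrightarrow>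
           (\<Sum>\<alpha>\<in>{\<alpha>. sum \<alpha> UNIV = k}. \<bar>c \<alpha>\<bar>)
             \<le> B / r ^ k * Sup {\<bar>polyfun k c y\<bar> | y. y \<in> Aset K x \<epsilon> \<and> norm y \<le> r}"
    using sum_top_coeffs_bound[OF markov \<epsilon>0 C0] card_midx_pos[where 'd='d, of k] coeff_const_pos[OF C0]
    by (intro exI[of _ "card (midx k :: ('d \<Rightarrow> nat) set) * coeff_const k \<epsilon>0 (C k)"]) auto
qed

end
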